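(* With $\alpha=(1+\sqrt5)/2$, $\beta=(1-\sqrt5)/2$: $$\sum_{k=1}^\infty\frac{L_k}{2^{k+2}(2k-1)k^2(2k+1)}=1-\frac{\pi^2}{48}+\frac14\ln^22-\frac12\ln^2\alpha-\frac{1}{2\alpha^2\sqrt{2\alpha}}\operatorname{arctanh}\Big(\sqrt{\tfrac\alpha2}\Big)-\frac{\alpha^2\sqrt\alpha}{2\sqrt2}\arctan\Big(\sqrt{\tfrac1{2\alpha}}\Big),$$ $$\sum_{k=1}^\infty\frac{L_{3k}}{5^k(2k-1)(2k)^2(2k+1)}=1-\frac{\pi^2}{48}+\frac12\ln^22-\frac32\ln^2\alpha-\frac12\ln2\ln5+\frac14\ln^25+\frac14\operatorname{Li}_2\Big(-\frac14\Big)$$ $$\qquad-\frac{1}{\alpha^3\sqrt{5\alpha}}\operatorname{arctanh}\Big(\frac{\alpha\sqrt\alpha}{\sqrt5}\Big)-\frac{\alpha^3\sqrt\alpha}{\sqrt5}\arctan\Big(\frac{1}{\alpha\sqrt{5\alpha}}\Big);$$ for every even integer $r\ge0$, $$\sum_{k=1}^\infty\frac{L_{rk}}{L_r^k(2k-1)(2k)^2(2k+1)}=1-\frac{\pi^2}{24}-\frac14r^2\ln^2\alpha+\frac14\ln^2(L_r)-\frac12\sqrt{\frac{1}{\alpha^{3r}L_r}}\operatorname{arctanh}\Big(\sqrt{\frac{\alpha^r}{L_r}}\Big)-\frac12\sqrt{\frac{\alpha^{3r}}{L_r}}\operatorname{arctanh}\Big(\sqrt{\frac{1}{\alpha^rL_r}}\Big);$$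 $$\sum_{k=1}^\infty\frac{L_{2k}}{5^k(4k-1)(4k)^2(4k+1)}+\sum_{k=1}^\infty\frac{F_{2k-1}}{5^{k-1}(4k-3)(4k-2)^2(4k-1)}=1-\frac{\pi^2}{24}+\frac1{16}\ln^25-\frac14\ln^2\alpha$$ $$\qquad-\frac{1}{2\sqrt{\sqrt5}}\left(\frac{1}{\alpha\sqrt\alpha}\operatorname{arctanh}\Big(\sqrt{\frac{\alpha}{\sqrt5}}\Big)+\alpha\sqrt\alpha\,\operatorname{arctanh}\Big(\sqrt{\frac{1}{\sqrt5\,\alpha}}\Big)\right);$$ and $$\sum_{k=1}^\infty\frac{L_{2k}}{4^{k+1}(2k-1)k^2(2k+1)}=1-\frac{\pi^2}{24}-\frac12\ln^2\alpha-\frac{9\sqrt5}{8}\ln\alpha+\frac5{16}\ln5+\frac18\ln^25-\frac12\ln2\ln5+\ln^22+\frac14\operatorname{Li}_2\Big(\frac15\Big).$$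
   Context: $F_n=(\alpha^n-\beta^n)/(\alpha-\beta)$ and $L_n=\alpha^n+\beta^n$ are the Fibonacci and Lucas numbers. $\operatorname{arctanh}(x)=\frac12\ln\frac{1+x}{1-x}$ for $|x|<1$; $\operatorname{Li}_2(x)=\sum_{k\ge1}x^k/k^2$ is the dilogarithm. *)

theory Defs
  imports "HOL-Analysis.Analysis"
begin

definition gr_alpha :: real where "gr_alpha = (1 + sqrt 5) / 2"
definition gr_beta :: real where "gr_beta = (1 - sqrt 5) / 2"

definition Fib :: "nat \<Rightarrow> real" where
  "Fib n = (gr_alpha ^ n - gr_beta ^ n) / (gr_alpha - gr_beta)"

definition Luc :: "nat \<Rightarrow> real" where
  "Luc n = gr_alpha ^ n + gr_beta ^ n"

definition Li2 :: "real \<Rightarrow> real" where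
  "Li2 x = (\<Sum>k. x ^ (Suc k) / (real (Suc k))^2)"

end

theory Submission
  imports Defs "HOL-Real_Asymp.Real_Asymp"
begin

(* With w k = 1 / ((2k - 1) (2k)^2 (2k + 1)) = (1 / (2k - 1) - 1 / (2k + 1)) / 2 - 1 / (4 k^2),
   every series of the theorem is a sum of (u^k + v^k) w k with u = alpha^m / c, v = beta^m / c
   (the two series of the fourth identity are its even- and odd-indexed parts),
   and for |y| < 1
     sum_{k >= 1} y^k w k = 1/2 - (1 - y)/2 * sum_j y^j / (2j + 1) - Li2 y / 4,
   where the middle series is artanh (sqrt y) / sqrt y or arctan (sqrt (-y)) / sqrt (-y).
   What remains are the values Li2 u + Li2 v.  They follow from the reflection, Landen,
   duplication and Abel five-term identities of the dilogarithm (each proved by showing that the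
   difference of the two sides has derivative zero), which at the golden ratio give
   Li2 (alpha - 1) = pi^2/10 - ln^2 alpha and Li2 (2 - alpha) = pi^2/15 - ln^2 alpha. *)

lemma summable_inverse_squares: "summable (\<lambda>k. 1 / (real (Suc k))^2)"
  using sums_summable[OF inverse_squares_sums] by (simp add: add.commute)

lemma norm_Li2_term_le:
  assumes "\<bar>x\<bar> \<le> 1"
  shows "norm (x ^ Suc n / (real (Suc n))^2) \<le> 1 / (real (Suc n))^2"
proof -
  have "\<bar>x\<bar> ^ Suc n \<le> 1" using assms by (intro power_le_one) auto
  then show ?thesis by (simp add: power_abs abs_mult divide_right_mono)
qed

lemma Li2_sums:
  assumes "\<bar>x\<bar> \<le> 1"
  shows "(\<lambda>k. x ^ Suc k / (real (Suc k))^2) sums Li2 x"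
  unfolding Li2_def
  by (intro summable_sums summable_comparison_test'[OF summable_inverse_squares]
      norm_Li2_term_le assms)

lemma Li2_0 [simp]: "Li2 0 = 0"
  unfolding Li2_def by simp

lemma Li2_1: "Li2 1 = pi^2 / 6"
  using sums_unique2[OF Li2_sums[of 1]] inverse_squares_sums by (simp add: add.commute)

lemma continuous_on_Li2: "continuous_on {-1..1} Li2"
proof -
  have "uniform_limit {-1..1} (\<lambda>n x. \<Sum>k<n. x ^ Suc k / (real (Suc k))^2) Li2 sequentially"
    unfolding Li2_def[abs_def]
    by (rule Weierstrass_m_test[OF norm_Li2_term_le summable_inverse_squares]) auto
  then show ?thesis
    by (rule uniform_limit_theorem[rotated]) (auto intro!: always_eventually continuous_intros)
qed

definition Li2_deriv :: "real \<Rightarrow> real" where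
  "Li2_deriv x = (\<Sum>n. x ^ n / real (Suc n))"

lemma Li2_deriv_summable:
  assumes "\<bar>x\<bar> < 1"
  shows "summable (\<lambda>n. x ^ n / real (Suc n))"
proof (rule summable_comparison_test'[where g = "\<lambda>n. \<bar>x\<bar> ^ n"])
  show "summable (\<lambda>n. \<bar>x\<bar> ^ n)" using assms by simp
  show "norm (x ^ n / real (Suc n)) \<le> \<bar>x\<bar> ^ n" for n
    using mult_left_mono[of 1 "real (Suc n)" "\<bar>x\<bar> ^ n"] by (simp add: power_abs divide_le_eq)
qed

lemma Li2_has_real_derivative:
  assumes "\<bar>x\<bar> < 1"
  shows "(Li2 has_real_derivative Li2_deriv x) (at x)"
proof -
  have Li2_eq: "Li2 = (\<lambda>x. \<Sum>n. (1 / (real (Suc n))^2) * x ^ Suc n)"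
    unfolding Li2_def by (intro ext) simp
  have coeff: "1 / (real (Suc n))^2 * real (Suc n) * y ^ n = y ^ n / real (Suc n)" for n y
    by (simp add: power2_eq_square)
  show ?thesis
    unfolding Li2_eq Li2_deriv_def coeff[symmetric]
    by (rule DERIV_power_series'[where R = 1])
      (use assms Li2_deriv_summable in \<open>simp_all only: coeff, auto\<close>)
qed

lemma Li2_deriv_eq:
  assumes "\<bar>x\<bar> < 1" "x \<noteq> 0"
  shows "Li2_deriv x = - ln (1 - x) / x"
proof -
  have "(\<lambda>n. - ((- (- x)) ^ n) / real n) sums ln (1 + - x)"
    using assms by (intro ln_series') simp
  then have "(\<lambda>n. - (x ^ Suc n / real (Suc n))) sums ln (1 - x)"
    by (subst sums_Suc_iff) simp
  then have "(\<lambda>n. x * (x ^ n / real (Suc n))) sums (- ln (1 - x))"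
    using sums_minus by fastforce
  moreover have "(\<lambda>n. x * (x ^ n / real (Suc n))) sums (x * Li2_deriv x)"
    unfolding Li2_deriv_def by (intro sums_mult summable_sums Li2_deriv_summable assms)
  ultimately have "x * Li2_deriv x = - ln (1 - x)"
    by (rule sums_unique2[symmetric])
  then show ?thesis using assms(2) by (simp add: field_simps)
qed

lemma has_real_derivative_Li2_comp:
  assumes "(g has_real_derivative g') (at x)" "\<bar>g x\<bar> < 1"
  shows "((\<lambda>x. Li2 (g x)) has_real_derivative Li2_deriv (g x) * g') (at x)"
  using DERIV_chain'[OF assms(1) Li2_has_real_derivative[OF assms(2)]] by simp

lemma DERIV_zero_imp_const_interval:
  fixes f :: "real \<Rightarrow> real"
  assumes "a < b" "\<And>t. a \<le> t \<Longrightarrow> t \<le> b \<Longrightarrow> (f has_real_derivative f' t) (at t)"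
    "\<And>t. a < t \<Longrightarrow> t < b \<Longrightarrow> f' t = 0"
  shows "f b = f a"
proof (rule DERIV_isconst_end[OF assms(1)])
  show "continuous_on {a..b} f"
    using assms(2) by (intro continuous_at_imp_continuous_on ballI DERIV_isCont) auto
  show "DERIV f t :> 0" if "a < t" "t < b" for t
    using assms(2,3) that by (metis less_imp_le)
qed

lemma Li2_Landen:
  assumes "-1 < z" "z \<le> 0"
  shows "Li2 z + Li2 (z / (z - 1)) = - ((ln (1 - z))^2 / 2)"
proof (cases "z = 0")
  case False
  define h where "h t = Li2 t + Li2 (t / (t - 1)) + (ln (1 - t))^2 / 2" for t
  define h' where "h' t = Li2_deriv t + Li2_deriv (t / (t - 1)) * (- 1 / (t - 1)^2)
    + ln (1 - t) / (t - 1)" for t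
  have bound: "\<bar>t / (t - 1)\<bar> < 1" if "t \<le> 0" for t :: real
    using that by (simp add: abs_divide divide_less_eq less_divide_eq)
  have "h 0 = h z"
  proof (rule DERIV_zero_imp_const_interval[where f = h and f' = h'])
    show "z < 0" using False assms by simp
    show "(h has_real_derivative h' t) (at t)" if "z \<le> t" "t \<le> 0" for t
      unfolding h_def[abs_def] h'_def using that assms bound[of t]
      by (auto intro!: derivative_eq_intros Li2_has_real_derivative has_real_derivative_Li2_comp
          simp: divide_simps power2_eq_square) (simp add: algebra_simps)
    show "h' t = 0" if "z < t" "t < 0" for t
    proof -
      have "1 - t / (t - 1) = inverse (1 - t)" using that by (simp add: field_simps)
      then have d2: "Li2_deriv (t / (t - 1)) = ln (1 - t) * (t - 1) / t"
        using Li2_deriv_eq[OF bound[of t]] that by (simp add: ln_inverse)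
      have d1: "Li2_deriv t = - ln (1 - t) / t"
        using Li2_deriv_eq[of t] that assms by simp
      show ?thesis
        unfolding h'_def d1 d2 using that
        by (simp add: divide_simps power2_eq_square) (simp add: algebra_simps)
    qed
  qed
  then show ?thesis unfolding h_def by simp
qed simp

lemma Li2_add_Li2_minus:
  assumes "0 \<le> x" "x < 1"
  shows "Li2 x + Li2 (- x) = Li2 (x^2) / 2"
proof (cases "x = 0")
  case False
  define h where "h t = Li2 t + Li2 (- t) - Li2 (t^2) / 2" for t
  define h' where "h' t = Li2_deriv t - Li2_deriv (- t) - Li2_deriv (t^2) * t" for t
  have "h x = h 0"
  proof (rule DERIV_zero_imp_const_interval[where f = h and f' = h'])
    show "0 < x" using False assms by simp
    show "(h has_real_derivative h' t) (at t)" if "0 \<le> t" "t \<le> x" for t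
      unfolding h_def[abs_def] h'_def using that assms abs_square_less_1[of t]
      by (auto intro!: derivative_eq_intros Li2_has_real_derivative has_real_derivative_Li2_comp)
    show "h' t = 0" if "0 < t" "t < x" for t
    proof -
      have "ln (1 - t^2) = ln (1 - t) + ln (1 + t)"
        using that assms ln_mult[of "1 - t" "1 + t"] by (simp add: power2_eq_square algebra_simps)
      then have d: "Li2_deriv (t^2) = - (ln (1 - t) + ln (1 + t)) / t^2"
        using Li2_deriv_eq[of "t^2"] that assms abs_square_less_1[of t] by simp
      have d': "Li2_deriv t = - ln (1 - t) / t" "Li2_deriv (- t) = ln (1 + t) / t"
        using Li2_deriv_eq[of t] Li2_deriv_eq[of "- t"] that assms by simp_all
      show ?thesis
        unfolding h'_def d d' using that by (simp add: field_simps power2_eq_square)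
    qed
  qed
  then show ?thesis unfolding h_def by simp
qed simp

lemma Li2_reflection:
  assumes "0 < x" "x < 1"
  shows "Li2 x + Li2 (1 - x) = pi^2 / 6 - ln x * ln (1 - x)"
proof -
  define h where "h t = Li2 t + Li2 (1 - t) + ln t * ln (1 - t)" for t
  have "DERIV h t :> 0" if "0 < t" "t < 1" for t
  proof -
    have d: "Li2_deriv t = - ln (1 - t) / t" "Li2_deriv (1 - t) = - ln t / (1 - t)"
      using Li2_deriv_eq[of t] Li2_deriv_eq[of "1 - t"] that by simp_all
    show ?thesis
      unfolding h_def[abs_def] using that
      by (auto intro!: derivative_eq_intros Li2_has_real_derivative has_real_derivative_Li2_comp
          simp: d divide_simps)
  qed
  then have const: "h t = h x" if "0 < t" "t < 1" for t
    using DERIV_isconst3[of 0 1 t x h] that assms by auto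
  \<comment> \<open>h is not defined at 0 because of ln t; its constant value is its limit at 0+.\<close>
  have lim0: "(Li2 \<longlongrightarrow> Li2 0) (at_right 0)"
    using DERIV_isCont[OF Li2_has_real_derivative[of 0]] by (simp add: isCont_def filterlim_at_split)
  have lim1: "((\<lambda>t. Li2 (1 - t)) \<longlongrightarrow> Li2 1) (at_right 0)"
  proof (rule continuous_on_tendsto_compose[OF continuous_on_Li2])
    show "((\<lambda>t::real. 1 - t) \<longlongrightarrow> 1) (at_right 0)" by real_asymp
    show "\<forall>\<^sub>F t in at_right 0. 1 - t \<in> {-1..(1::real)}"
      using eventually_at_right_real[of 0 "1::real"] by (auto elim!: eventually_mono)
  qed simp
  have "((\<lambda>t::real. ln t * ln (1 - t)) \<longlongrightarrow> 0) (at_right 0)"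
    by real_asymp
  then have "(h \<longlongrightarrow> Li2 0 + Li2 1 + 0) (at_right 0)"
    unfolding h_def[abs_def] by (intro tendsto_add lim0 lim1 \<open>(_ \<longlongrightarrow> 0) _\<close>)
  then have "(h \<longlongrightarrow> pi^2 / 6) (at_right 0)"
    by (simp add: Li2_1)
  moreover have "\<forall>\<^sub>F t in at_right 0. h t = h x"
    using eventually_at_right_real[of 0 "1::real"] const by (auto elim!: eventually_mono)
  ultimately have "((\<lambda>_. h x) \<longlongrightarrow> pi^2 / 6) (at_right (0::real))"
    by (rule Lim_transform_eventually)
  then have "h x = pi^2 / 6"
    using tendsto_const tendsto_unique trivial_limit_at_right_real by blast
  then show ?thesis unfolding h_def by simp
qed

lemma Li2_Abel_arguments_bounded:
  fixes x y t :: real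
  assumes y: "\<bar>y\<bar> < 1" and x: "x < 1" "x + y < 1"
    and bounds: "\<bar>y / (1 - x)\<bar> < 1" "\<bar>x * y / ((1 - x) * (1 - y))\<bar> < 1"
    and t: "0 \<le> t" "t \<le> x"
  shows "\<bar>t\<bar> < 1" "\<bar>t / (1 - y)\<bar> < 1" "\<bar>y / (1 - t)\<bar> < 1"
    "\<bar>t * y / ((1 - t) * (1 - y))\<bar> < 1"
proof -
  have t1: "1 - x \<le> 1 - t" "0 < 1 - x" using t x by linarith+
  have "0 < 1 - y" using y by (simp add: abs_less_iff)
  show "\<bar>t\<bar> < 1" "\<bar>t / (1 - y)\<bar> < 1"
    using t x t1 \<open>0 < 1 - y\<close> by (auto simp: divide_less_eq)
  have "\<bar>y / (1 - t)\<bar> \<le> \<bar>y / (1 - x)\<bar>"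
    using t1 by (simp add: abs_divide divide_left_mono)
  then show "\<bar>y / (1 - t)\<bar> < 1" using bounds(1) by linarith
  have "t / (1 - t) \<le> x / (1 - x)"
    using t t1 by (simp add: divide_simps) (simp add: algebra_simps)
  then have "t / (1 - t) * (\<bar>y\<bar> / (1 - y)) \<le> x / (1 - x) * (\<bar>y\<bar> / (1 - y))"
    using \<open>0 < 1 - y\<close> by (intro mult_right_mono) auto
  then have "\<bar>t * y / ((1 - t) * (1 - y))\<bar> \<le> \<bar>x * y / ((1 - x) * (1 - y))\<bar>"
    using t t1 \<open>0 < 1 - y\<close> by (simp add: abs_divide abs_mult)
  then show "\<bar>t * y / ((1 - t) * (1 - y))\<bar> < 1" using bounds(2) by linarith
qed

lemma Li2_Abel_derivative_eq_0:
  assumes t: "0 < t" "0 < 1 - t - y" and y: "y \<noteq> 0" "y < 1"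
    and bounds: "\<bar>t\<bar> < 1" "\<bar>t / (1 - y)\<bar> < 1" "\<bar>y / (1 - t)\<bar> < 1"
      "\<bar>t * y / ((1 - t) * (1 - y))\<bar> < 1"
  shows "Li2_deriv (t / (1 - y)) / (1 - y) + Li2_deriv (y / (1 - t)) * y / (1 - t)^2
    - Li2_deriv (t * y / ((1 - t) * (1 - y))) * y / ((1 - t)^2 * (1 - y))
    - Li2_deriv t + ln (1 - y) / (1 - t) = 0"
proof -
  have "t < 1" using bounds(1) by simp
  have "1 - t / (1 - y) = (1 - t - y) / (1 - y)" "1 - y / (1 - t) = (1 - t - y) / (1 - t)"
    using t y \<open>t < 1\<close> by (simp_all add: field_simps)
  then have e1: "Li2_deriv (t / (1 - y)) = - (ln (1 - t - y) - ln (1 - y)) / (t / (1 - y))"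
    and e2: "Li2_deriv (y / (1 - t)) = - (ln (1 - t - y) - ln (1 - t)) / (y / (1 - t))"
    using Li2_deriv_eq[of "t / (1 - y)"] Li2_deriv_eq[of "y / (1 - t)"] bounds t y \<open>t < 1\<close>
    by (simp_all add: ln_div)
  have "1 - t * y / ((1 - t) * (1 - y)) = ((1 - t) * (1 - y) - t * y) / ((1 - t) * (1 - y))"
    using y \<open>t < 1\<close> by (simp add: diff_divide_distrib)
  also have "(1 - t) * (1 - y) - t * y = 1 - t - y"
    by (simp add: algebra_simps)
  finally have e3: "Li2_deriv (t * y / ((1 - t) * (1 - y)))
      = - (ln (1 - t - y) - ln (1 - t) - ln (1 - y)) / (t * y / ((1 - t) * (1 - y)))"
    using Li2_deriv_eq[of "t * y / ((1 - t) * (1 - y))"] bounds t y \<open>t < 1\<close>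
    by (simp add: ln_div ln_mult)
  have e4: "Li2_deriv t = - ln (1 - t) / t"
    using Li2_deriv_eq[of t] bounds t by simp
  show ?thesis
    unfolding e1 e2 e3 e4 using t y \<open>t < 1\<close>
    by (simp add: divide_simps power2_eq_square) (simp add: algebra_simps)
qed

lemma Li2_Abel:
  assumes y: "\<bar>y\<bar> < 1" and x: "0 < x" "x < 1" "x + y < 1"
    and bounds: "\<bar>y / (1 - x)\<bar> < 1" "\<bar>x * y / ((1 - x) * (1 - y))\<bar> < 1"
  shows "Li2 (x / (1 - y)) + Li2 (y / (1 - x)) - Li2 (x * y / ((1 - x) * (1 - y)))
    = Li2 x + Li2 y + ln (1 - x) * ln (1 - y)"
proof (cases "y = 0")
  case False
  have y1: "0 < 1 - y" using y by simp
  define h where "h t = Li2 (t / (1 - y)) + Li2 (y / (1 - t)) - Li2 (t * y / ((1 - t) * (1 - y)))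
    - Li2 t - ln (1 - t) * ln (1 - y)" for t
  define h' where "h' t = Li2_deriv (t / (1 - y)) / (1 - y) + Li2_deriv (y / (1 - t)) * y / (1 - t)^2
    - Li2_deriv (t * y / ((1 - t) * (1 - y))) * y / ((1 - t)^2 * (1 - y))
    - Li2_deriv t + ln (1 - y) / (1 - t)" for t
  note bounds_t = Li2_Abel_arguments_bounded[OF y x(2,3) bounds]
  have "h x = h 0"
  proof (rule DERIV_zero_imp_const_interval[where f = h and f' = h'])
    show "(h has_real_derivative h' t) (at t)" if "0 \<le> t" "t \<le> x" for t
      unfolding h_def[abs_def] h'_def using that x y1 bounds_t[OF that]
      by (auto intro!: derivative_eq_intros Li2_has_real_derivative has_real_derivative_Li2_comp
          simp: divide_simps power2_eq_square) (simp_all add: algebra_simps)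
    show "h' t = 0" if "0 < t" "t < x" for t
      unfolding h'_def using that x y1 False bounds_t[of t]
      by (intro Li2_Abel_derivative_eq_0) auto
  qed (use x in simp)
  then show ?thesis unfolding h_def by simp
qed simp

definition weight :: "nat \<Rightarrow> real" where
  "weight k = 1 / ((2 * real k - 1) * (2 * real k)^2 * (2 * real k + 1))"

lemma weight_Suc:
  "weight (Suc n) = (1 / (2 * real n + 1) - 1 / (2 * real (Suc n) + 1)) / 2 - 1 / (real (Suc n))^2 / 4"
proof -
  have "0 < 2 * real n + 1" "0 < 2 * real n + 3" "0 < real n + 1" by linarith+
  then show ?thesis
    unfolding weight_def by (simp add: divide_simps power2_eq_square) (simp add: algebra_simps)
qed

lemma weight_sums:
  assumes "\<bar>y\<bar> < 1" and S: "(\<lambda>j. y ^ j / (2 * real j + 1)) sums S"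
  shows "(\<lambda>n. y ^ Suc n * weight (Suc n)) sums (1 / 2 - (1 - y) / 2 * S - Li2 y / 4)"
proof -
  have "(\<lambda>n. y * (y ^ n / (2 * real n + 1))) sums (y * S)"
    by (rule sums_mult[OF S])
  moreover have "(\<lambda>n. y ^ Suc n / (2 * real (Suc n) + 1)) sums (S - 1)"
    using S by (subst sums_Suc_iff) simp
  moreover have "(\<lambda>n. y ^ Suc n / (real (Suc n))^2) sums Li2 y"
    using Li2_sums assms(1) by simp
  ultimately have "(\<lambda>n. (y * (y ^ n / (2 * real n + 1)) - y ^ Suc n / (2 * real (Suc n) + 1)) / 2
      - y ^ Suc n / (real (Suc n))^2 / 4) sums ((y * S - (S - 1)) / 2 - Li2 y / 4)"
    by (intro sums_diff sums_divide)
  then show ?thesis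
    unfolding weight_Suc by (simp add: field_simps)
qed

lemma artanh_sqrt_series:
  assumes "0 < y" "y < 1"
  shows "(\<lambda>j. y ^ j / (2 * real j + 1)) sums (artanh (sqrt y) / sqrt y)"
proof -
  define x where "x = sqrt y"
  have x: "0 < x" "x < 1" using assms by (auto simp: x_def)
  define z where "z = (1 + x) / (1 - x)"
  have "(z - 1) / (z + 1) = x"
    using x by (simp add: z_def field_simps)
  moreover have "(\<lambda>n. 2 * ((z - 1) / (z + 1)) ^ (2 * n + 1) / real (2 * n + 1)) sums ln z"
    using x by (intro ln_series_quadratic) (simp add: z_def)
  ultimately have "(\<lambda>n. 2 * x ^ (2 * n + 1) / (2 * real n + 1)) sums (2 * artanh x)"
    by (simp add: artanh_def z_def add.commute)
  then have "(\<lambda>n. 2 * x ^ (2 * n + 1) / (2 * real n + 1) / (2 * x)) sums (2 * artanh x / (2 * x))"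
    by (rule sums_divide)
  moreover have "x ^ (2 * n + 1) = x * y ^ n" for n
    using assms by (simp add: x_def power_mult)
  ultimately show ?thesis
    using x by (simp add: x_def)
qed

lemma arctan_sqrt_series:
  assumes "-1 < y" "y < 0"
  shows "(\<lambda>j. y ^ j / (2 * real j + 1)) sums (arctan (sqrt (- y)) / sqrt (- y))"
proof -
  define x where "x = sqrt (- y)"
  have x: "0 < x" "x < 1" using assms by (auto simp: x_def)
  have "(\<lambda>k. (-1) ^ k * (1 / real (k * 2 + 1) * x ^ (k * 2 + 1))) sums arctan x"
    using summable_arctan_series[of x] arctan_series[of x] x by (simp add: sums_iff)
  then have "(\<lambda>k. (-1) ^ k * (1 / real (k * 2 + 1) * x ^ (k * 2 + 1)) / x) sums (arctan x / x)"
    by (rule sums_divide)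
  moreover have "(-1) ^ k * x ^ (k * 2 + 1) = x * y ^ k" for k
  proof -
    have "(-1) ^ k * x ^ (k * 2 + 1) = x * ((-1) ^ k * (x^2) ^ k)"
      by (simp add: power_mult[symmetric] mult.commute)
    also have "\<dots> = x * (- (x^2)) ^ k"
      by (simp add: power_minus[of "x^2"])
    also have "x^2 = - y"
      using assms by (simp add: x_def)
    finally show ?thesis by simp
  qed
  ultimately show ?thesis
    using x by (simp add: x_def add.commute mult.commute)
qed

lemma weight_sums_artanh:
  assumes "0 < y" "y < 1"
  shows "(\<lambda>n. y ^ Suc n * weight (Suc n))
    sums (1 / 2 - (1 - y) / (2 * sqrt y) * artanh (sqrt y) - Li2 y / 4)"
  using weight_sums[OF _ artanh_sqrt_series[OF assms]] assms by simp

lemma weight_sums_arctan: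
  assumes "-1 < y" "y < 0"
  shows "(\<lambda>n. y ^ Suc n * weight (Suc n))
    sums (1 / 2 - (1 - y) / (2 * sqrt (- y)) * arctan (sqrt (- y)) - Li2 y / 4)"
  using weight_sums[OF _ arctan_sqrt_series[OF assms]] assms by simp

lemma weight_sums_complementary:
  assumes "0 < u" "0 < v" "u + v = 1"
  shows "(\<lambda>n. (u ^ Suc n + v ^ Suc n) * weight (Suc n))
    sums (1 - pi^2 / 24 + ln u * ln v / 4
          - v / (2 * sqrt u) * artanh (sqrt u) - u / (2 * sqrt v) * artanh (sqrt v))"
proof -
  have uv: "1 - u = v" "1 - v = u" "u < 1" "v < 1" using assms by auto
  have sums: "(\<lambda>n. (u ^ Suc n + v ^ Suc n) * weight (Suc n))
      sums ((1 / 2 - v / (2 * sqrt u) * artanh (sqrt u) - Li2 u / 4)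
          + (1 / 2 - u / (2 * sqrt v) * artanh (sqrt v) - Li2 v / 4))"
    using sums_add[OF weight_sums_artanh[of u] weight_sums_artanh[of v]] uv assms(1,2)
    by (simp add: distrib_right)
  have "Li2 u + Li2 v = pi^2 / 6 - ln u * ln v"
    using Li2_reflection[of u] uv assms(1) by simp
  then have "(1 / 2 - v / (2 * sqrt u) * artanh (sqrt u) - Li2 u / 4)
      + (1 / 2 - u / (2 * sqrt v) * artanh (sqrt v) - Li2 v / 4)
    = 1 - pi^2 / 24 + ln u * ln v / 4
      - v / (2 * sqrt u) * artanh (sqrt u) - u / (2 * sqrt v) * artanh (sqrt v)"
    by linarith
  with sums show ?thesis by (simp only:)
qed

abbreviation \<phi> :: real where "\<phi> \<equiv> gr_alpha"

lemma sqrt5_eq: "sqrt 5 = 2 * \<phi> - 1"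
  unfolding gr_alpha_def by (simp add: field_simps)

lemma golden_sq: "\<phi>^2 = \<phi> + 1"
  unfolding gr_alpha_def by (simp add: power2_eq_square algebra_simps)

lemma golden_bounds: "3 / 2 < \<phi>" "\<phi> < 2"
proof -
  have "2 < sqrt (5::real)" "sqrt (5::real) < 3"
    by (simp_all add: real_less_rsqrt real_less_lsqrt)
  then show "3 / 2 < \<phi>" "\<phi> < 2" unfolding gr_alpha_def by simp_all
qed

lemma gr_beta_eq: "gr_beta = 1 - \<phi>"
  unfolding gr_alpha_def gr_beta_def by (simp add: field_simps)

lemma gr_beta_sq: "gr_beta^2 = 2 - \<phi>"
  unfolding gr_beta_eq using golden_sq by algebra

lemma gr_beta_eq_inverse: "gr_beta = - 1 / \<phi>"
  using golden_sq golden_bounds unfolding gr_beta_eq by (simp add: field_simps power2_eq_square)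

lemma ln_golden_minus_1: "ln (\<phi> - 1) = - ln \<phi>"
proof -
  have "\<phi> - 1 = inverse \<phi>"
    using gr_beta_eq gr_beta_eq_inverse by (simp add: divide_inverse)
  then show ?thesis by (simp add: ln_inverse)
qed

lemma ln_2_minus_golden: "ln (2 - \<phi>) = - 2 * ln \<phi>"
proof -
  have "2 - \<phi> = inverse (\<phi>^2)"
    using golden_sq golden_bounds by (simp add: field_simps) algebra
  then show ?thesis
    using golden_bounds by (simp add: ln_inverse ln_realpow)
qed

lemma Li2_golden:
  "Li2 (\<phi> - 1) = pi^2 / 10 - (ln \<phi>)^2" "Li2 (2 - \<phi>) = pi^2 / 15 - (ln \<phi>)^2"
proof -
  have "Li2 (\<phi> - 1) + Li2 (1 - (\<phi> - 1)) = pi^2 / 6 - ln (\<phi> - 1) * ln (1 - (\<phi> - 1))"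
    using golden_bounds by (intro Li2_reflection) auto
  then have reflection: "Li2 (\<phi> - 1) + Li2 (2 - \<phi>) = pi^2 / 6 - 2 * (ln \<phi>)^2"
    by (simp add: ln_golden_minus_1 ln_2_minus_golden power2_eq_square)
  have "(1 - \<phi>) / ((1 - \<phi>) - 1) = 2 - \<phi>"
    using golden_sq golden_bounds by (simp add: field_simps) algebra
  then have Landen: "Li2 (1 - \<phi>) + Li2 (2 - \<phi>) = - ((ln \<phi>)^2 / 2)"
    using Li2_Landen[of "1 - \<phi>"] golden_bounds by simp
  have "(\<phi> - 1)^2 = 2 - \<phi>"
    using golden_sq by algebra
  then have square: "Li2 (\<phi> - 1) + Li2 (1 - \<phi>) = Li2 (2 - \<phi>) / 2"
    using Li2_add_Li2_minus[of "\<phi> - 1"] golden_bounds by simp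
  from reflection Landen square
  show "Li2 (\<phi> - 1) = pi^2 / 10 - (ln \<phi>)^2" "Li2 (2 - \<phi>) = pi^2 / 15 - (ln \<phi>)^2"
    by linarith+
qed

lemma Li2_half: "Li2 (1 / 2) = pi^2 / 12 - (ln 2)^2 / 2"
  using Li2_reflection[of "1 / 2"] by (simp add: ln_div power2_eq_square)

lemma Li2_golden_half_sum:
  "Li2 (\<phi> / 2) + Li2 (gr_beta / 2) = pi^2 / 12 - (ln 2)^2 + 2 * (ln \<phi>)^2"
proof -
  have Abel_instance: "Li2 ((1 / 2) / (1 - (2 - \<phi>))) + Li2 ((2 - \<phi>) / (1 - 1 / 2))
      - Li2 ((1 / 2) * (2 - \<phi>) / ((1 - 1 / 2) * (1 - (2 - \<phi>))))
    = Li2 (1 / 2) + Li2 (2 - \<phi>) + ln (1 - 1 / 2) * ln (1 - (2 - \<phi>))"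
    using golden_bounds by (intro Li2_Abel) (auto simp: abs_less_iff field_simps)
  have args: "(1 / 2) / (1 - (2 - \<phi>)) = \<phi> / 2"
    "(1 / 2) * (2 - \<phi>) / ((1 - 1 / 2) * (1 - (2 - \<phi>))) = \<phi> - 1"
    using golden_sq golden_bounds by (simp_all add: field_simps) algebra+
  have Abel: "Li2 (\<phi> / 2) + Li2 (4 - 2 * \<phi>) - Li2 (\<phi> - 1)
      = Li2 (1 / 2) + Li2 (2 - \<phi>) + ln 2 * ln \<phi>"
    using Abel_instance unfolding args by (simp add: ln_div ln_golden_minus_1 mult.commute)
  have "1 - (4 - 2 * \<phi>) = inverse (\<phi>^3)"
    using golden_sq golden_bounds by (simp add: field_simps) algebra
  moreover have "ln (4 - 2 * \<phi>) = ln 2 - 2 * ln \<phi>"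
    using ln_mult[of 2 "2 - \<phi>"] golden_bounds by (simp add: ln_2_minus_golden)
  ultimately have reflection: "Li2 (4 - 2 * \<phi>) + Li2 (inverse (\<phi>^3))
      = pi^2 / 6 + (ln 2 - 2 * ln \<phi>) * (3 * ln \<phi>)"
    using Li2_reflection[of "4 - 2 * \<phi>"] golden_bounds by (simp add: ln_inverse ln_realpow)
  have "((1 - \<phi>) / 2) / ((1 - \<phi>) / 2 - 1) = inverse (\<phi>^3)"
    using golden_sq golden_bounds by (simp add: field_simps) algebra
  moreover have "ln (1 - (1 - \<phi>) / 2) = 2 * ln \<phi> - ln 2"
  proof -
    have "1 - (1 - \<phi>) / 2 = \<phi>^2 / 2" using golden_sq by (simp add: field_simps)
    then have "ln (1 - (1 - \<phi>) / 2) = ln (\<phi>^2 / 2)" by (rule arg_cong)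
    then show ?thesis using golden_bounds by (simp add: ln_div ln_realpow)
  qed
  ultimately have Landen: "Li2 ((1 - \<phi>) / 2) + Li2 (inverse (\<phi>^3)) = - ((2 * ln \<phi> - ln 2)^2 / 2)"
    using Li2_Landen[of "(1 - \<phi>) / 2"] golden_bounds by simp
  show ?thesis
    unfolding gr_beta_eq using Abel reflection Landen Li2_golden Li2_half by algebra
qed

lemma golden_cube: "\<phi>^3 = 2 * \<phi> + 1" "gr_beta^3 = 3 - 2 * \<phi>"
  unfolding gr_beta_eq using golden_sq by algebra+

lemma Li2_golden_cube_sum:
  "Li2 (\<phi>^3 / 5) + Li2 (gr_beta^3 / 5)
    = pi^2 / 12 - 2 * (ln 2)^2 + 6 * (ln \<phi>)^2 + 2 * ln 2 * ln 5 - (ln 5)^2 - Li2 (- 1 / 4)"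
proof -
  have "(\<phi>^3 / 5) * (gr_beta^3 / 5) = - 1 / 25" "(1 - \<phi>^3 / 5) * (1 - gr_beta^3 / 5) = 4 / 25"
    unfolding golden_cube using golden_sq by (simp_all add: field_simps) algebra+
  then have args: "(\<phi>^3 / 5) / (1 - gr_beta^3 / 5) = \<phi> / 2"
    "(gr_beta^3 / 5) / (1 - \<phi>^3 / 5) = gr_beta / 2"
    "(\<phi>^3 / 5) * (gr_beta^3 / 5) / ((1 - \<phi>^3 / 5) * (1 - gr_beta^3 / 5)) = - 1 / 4"
    unfolding golden_cube unfolding gr_beta_eq using golden_sq golden_bounds
    by (simp_all add: field_simps)
  have "\<bar>gr_beta^3 / 5\<bar> < 1" "0 < \<phi>^3 / 5" "\<phi>^3 / 5 < 1" "\<phi>^3 / 5 + gr_beta^3 / 5 < 1"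
    "\<bar>(gr_beta^3 / 5) / (1 - \<phi>^3 / 5)\<bar> < 1"
    "\<bar>(\<phi>^3 / 5) * (gr_beta^3 / 5) / ((1 - \<phi>^3 / 5) * (1 - gr_beta^3 / 5))\<bar> < 1"
    unfolding args unfolding golden_cube unfolding gr_beta_eq using golden_bounds by (auto simp: field_simps)
  from Li2_Abel[OF this] have Abel: "Li2 (\<phi> / 2) + Li2 (gr_beta / 2) - Li2 (- 1 / 4)
    = Li2 (\<phi>^3 / 5) + Li2 (gr_beta^3 / 5) + ln (1 - \<phi>^3 / 5) * ln (1 - gr_beta^3 / 5)"
    unfolding args .
  have "1 - \<phi>^3 / 5 = 2 / (5 * \<phi>^2)"
    using golden_sq golden_bounds by (simp add: field_simps) algebra
  then have ln1: "ln (1 - \<phi>^3 / 5) = ln 2 - 2 * ln \<phi> - ln 5"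
    using golden_bounds by (simp add: ln_div ln_mult ln_realpow)
  have "1 - gr_beta^3 / 5 = 2 * \<phi>^2 / 5"
    unfolding golden_cube using golden_sq by (simp add: field_simps)
  then have "ln (1 - gr_beta^3 / 5) = ln (2 * \<phi>^2 / 5)" by (rule arg_cong)
  then have ln2: "ln (1 - gr_beta^3 / 5) = ln 2 + 2 * ln \<phi> - ln 5"
    using golden_bounds by (simp add: ln_div ln_mult ln_realpow)
  show ?thesis
    using Abel Li2_golden_half_sum unfolding ln1 ln2 by algebra
qed

lemma Li2_golden_sqrt5_sum:
  "Li2 (\<phi> / sqrt 5) + Li2 (1 / (sqrt 5 * \<phi>)) = pi^2 / 6 + (ln \<phi>)^2 - (ln 5)^2 / 4"
proof -
  have "1 - \<phi> / sqrt 5 = 1 / (sqrt 5 * \<phi>)"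
    unfolding sqrt5_eq using golden_sq golden_bounds by (simp add: field_simps) algebra
  moreover have "0 < \<phi> / sqrt 5" "\<phi> / sqrt 5 < 1"
    unfolding sqrt5_eq using golden_bounds by (auto simp: field_simps)
  ultimately have reflection: "Li2 (\<phi> / sqrt 5) + Li2 (1 / (sqrt 5 * \<phi>))
      = pi^2 / 6 - ln (\<phi> / sqrt 5) * ln (1 / (sqrt 5 * \<phi>))"
    using Li2_reflection[of "\<phi> / sqrt 5"] by simp
  have "ln (\<phi> / sqrt 5) = ln \<phi> - ln 5 / 2" "ln (1 / (sqrt 5 * \<phi>)) = - ln 5 / 2 - ln \<phi>"
    using golden_bounds by (simp_all add: ln_div ln_mult ln_sqrt)
  with reflection show ?thesis
    by (simp only:) (simp add: algebra_simps power2_eq_square)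
qed

lemma Li2_golden_square_sum:
  "Li2 (\<phi>^2 / 4) + Li2 (gr_beta^2 / 4)
    = pi^2 / 6 - (ln 5)^2 / 2 + 2 * (ln \<phi>)^2 + 2 * ln 2 * ln 5 - 4 * (ln 2)^2 - Li2 (1 / 5)"
proof -
  have args: "(\<phi>^2 / 4) / (1 - gr_beta^2 / 4) = \<phi> / sqrt 5"
    "(gr_beta^2 / 4) / (1 - \<phi>^2 / 4) = 1 / (sqrt 5 * \<phi>)"
    "(\<phi>^2 / 4) * (gr_beta^2 / 4) / ((1 - \<phi>^2 / 4) * (1 - gr_beta^2 / 4)) = 1 / 5"
    unfolding gr_beta_sq sqrt5_eq using golden_sq golden_bounds
    by (simp_all add: field_simps) algebra+
  have "2 < sqrt 5 * \<phi>"
    using golden_bounds mult_strict_mono[of 2 "sqrt 5" 1 \<phi>] by (simp add: real_less_rsqrt)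
  then have "\<bar>gr_beta^2 / 4\<bar> < 1" "0 < \<phi>^2 / 4" "\<phi>^2 / 4 < 1" "\<phi>^2 / 4 + gr_beta^2 / 4 < 1"
    "\<bar>(gr_beta^2 / 4) / (1 - \<phi>^2 / 4)\<bar> < 1"
    "\<bar>(\<phi>^2 / 4) * (gr_beta^2 / 4) / ((1 - \<phi>^2 / 4) * (1 - gr_beta^2 / 4))\<bar> < 1"
    unfolding args unfolding golden_sq gr_beta_sq using golden_bounds by (auto simp: field_simps)
  from Li2_Abel[OF this] have Abel: "Li2 (\<phi> / sqrt 5) + Li2 (1 / (sqrt 5 * \<phi>)) - Li2 (1 / 5)
    = Li2 (\<phi>^2 / 4) + Li2 (gr_beta^2 / 4) + ln (1 - \<phi>^2 / 4) * ln (1 - gr_beta^2 / 4)"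
    unfolding args .
  have "1 - \<phi>^2 / 4 = sqrt 5 / (4 * \<phi>)"
    unfolding sqrt5_eq using golden_sq golden_bounds by (simp add: field_simps) algebra
  then have ln1: "ln (1 - \<phi>^2 / 4) = ln 5 / 2 - 2 * ln 2 - ln \<phi>"
    using golden_bounds ln_realpow[of 2 2] by (simp add: ln_div ln_mult ln_sqrt)
  have "1 - gr_beta^2 / 4 = sqrt 5 * \<phi> / 4"
    unfolding sqrt5_eq gr_beta_sq using golden_sq by (simp add: field_simps) algebra
  then have "ln (1 - gr_beta^2 / 4) = ln (sqrt 5 * \<phi> / 4)" by (rule arg_cong)
  then have ln2: "ln (1 - gr_beta^2 / 4) = ln 5 / 2 + ln \<phi> - 2 * ln 2"
    using golden_bounds ln_realpow[of 2 2] by (simp add: ln_div ln_mult ln_sqrt)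
  have "(ln 5 / 2 - 2 * ln 2 - ln \<phi>) * (ln 5 / 2 + ln \<phi> - 2 * ln 2)
      = (ln 5)^2 / 4 - 2 * ln 2 * ln 5 + 4 * (ln 2)^2 - (ln \<phi>)^2"
    by (simp add: algebra_simps power2_eq_square)
  then show ?thesis
    using Abel Li2_golden_sqrt5_sum unfolding ln1 ln2 by linarith
qed

lemma Luc_div_weight:
  "Luc (m * k) / (c ^ k * ((2 * real k - 1) * (2 * real k)^2 * (2 * real k + 1)))
    = (\<phi>^m / c) ^ k * weight k + (gr_beta^m / c) ^ k * weight k"
  unfolding Luc_def weight_def by (simp add: power_mult power_divide add_divide_distrib)

lemma golden_half_coefficients:
  "(1 - \<phi> / 2) / (2 * sqrt (\<phi> / 2)) = 1 / (2 * \<phi>^2 * sqrt (2 * \<phi>))"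
  "(1 - gr_beta / 2) / (2 * sqrt (- (gr_beta / 2))) = \<phi>^2 * sqrt \<phi> / (2 * sqrt 2)"
  "- (gr_beta / 2) = 1 / (2 * \<phi>)"
proof -
  have pos: "0 < sqrt \<phi>" using golden_bounds by simp
  have u: "1 - \<phi> / 2 = 1 / (2 * \<phi>^2)"
    using golden_sq golden_bounds by (simp add: field_simps) algebra
  have v: "1 - gr_beta / 2 = \<phi>^2 / 2"
    unfolding gr_beta_eq using golden_sq by (simp add: field_simps)
  show minus_beta: "- (gr_beta / 2) = 1 / (2 * \<phi>)"
    unfolding gr_beta_eq_inverse by simp
  show "(1 - \<phi> / 2) / (2 * sqrt (\<phi> / 2)) = 1 / (2 * \<phi>^2 * sqrt (2 * \<phi>))"
    unfolding u using pos by (simp add: real_sqrt_divide real_sqrt_mult field_simps)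
  show "(1 - gr_beta / 2) / (2 * sqrt (- (gr_beta / 2))) = \<phi>^2 * sqrt \<phi> / (2 * sqrt 2)"
    unfolding v minus_beta using pos by (simp add: real_sqrt_divide real_sqrt_mult field_simps)
qed

lemma sums_Luc_over_2_pow:
  "(\<lambda>n. let k = Suc n in Luc k / (2 ^ (k + 2) * (2 * real k - 1) * (real k)^2 * (2 * real k + 1)))
    sums (1 - pi^2 / 48 + (ln 2)^2 / 4 - (ln \<phi>)^2 / 2
          - 1 / (2 * \<phi>^2 * sqrt (2 * \<phi>)) * artanh (sqrt (\<phi> / 2))
          - \<phi>^2 * sqrt \<phi> / (2 * sqrt 2) * arctan (sqrt (1 / (2 * \<phi>))))"
  (is "?series sums _")
proof -
  have "Luc k / (2 ^ (k + 2) * (2 * real k - 1) * (real k)^2 * (2 * real k + 1))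
      = (\<phi> / 2) ^ k * weight k + (gr_beta / 2) ^ k * weight k" for k
  proof -
    have denominator: "2 ^ (k + 2) * (2 * real k - 1) * (real k)^2 * (2 * real k + 1)
        = 2 ^ k * ((2 * real k - 1) * (2 * real k)^2 * (2 * real k + 1))"
      by (simp add: power_add power2_eq_square)
    show ?thesis unfolding denominator using Luc_div_weight[of 1 k 2] by simp
  qed
  then have terms: "?series
      = (\<lambda>n. (\<phi> / 2) ^ Suc n * weight (Suc n) + (gr_beta / 2) ^ Suc n * weight (Suc n))"
    by (simp only: Let_def)
  have "0 < \<phi> / 2" "\<phi> / 2 < 1" "-1 < gr_beta / 2" "gr_beta / 2 < 0"
    unfolding gr_beta_eq using golden_bounds by auto
  then have sums: "(\<lambda>n. (\<phi> / 2) ^ Suc n * weight (Suc n) + (gr_beta / 2) ^ Suc n * weight (Suc n))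
      sums ((1 / 2 - (1 - \<phi> / 2) / (2 * sqrt (\<phi> / 2)) * artanh (sqrt (\<phi> / 2)) - Li2 (\<phi> / 2) / 4)
          + (1 / 2 - (1 - gr_beta / 2) / (2 * sqrt (- (gr_beta / 2))) * arctan (sqrt (- (gr_beta / 2)))
             - Li2 (gr_beta / 2) / 4))"
    by (intro sums_add weight_sums_artanh weight_sums_arctan)
  show ?thesis
    unfolding terms
    by (rule back_subst[of "(sums) _", OF sums])
      (simp only: golden_half_coefficients(1,2), simp only: golden_half_coefficients(3),
       use Li2_golden_half_sum in linarith)
qed

lemma golden_cube_coefficients:
  "(1 - \<phi>^3 / 5) / (2 * sqrt (\<phi>^3 / 5)) = 1 / (\<phi>^3 * sqrt (5 * \<phi>))"
  "(1 - gr_beta^3 / 5) / (2 * sqrt (- (gr_beta^3 / 5))) = \<phi>^3 * sqrt \<phi> / sqrt 5"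
  "sqrt (\<phi>^3 / 5) = \<phi> * sqrt \<phi> / sqrt 5"
  "sqrt (- (gr_beta^3 / 5)) = 1 / (\<phi> * sqrt (5 * \<phi>))"
proof -
  have pos: "0 < \<phi>" "0 < sqrt \<phi>" using golden_bounds by simp_all
  have u: "1 - \<phi>^3 / 5 = 2 / (5 * \<phi>^2)"
    unfolding golden_cube using pos by (simp add: field_simps) (use golden_sq in algebra)
  have v: "1 - gr_beta^3 / 5 = 2 * \<phi>^2 / 5"
    unfolding golden_cube using golden_sq by (simp add: field_simps)
  show sqrt_u: "sqrt (\<phi>^3 / 5) = \<phi> * sqrt \<phi> / sqrt 5"
    using pos by (simp add: power3_eq_cube real_sqrt_mult real_sqrt_divide)
  have "- (gr_beta^3 / 5) = 1 / (5 * \<phi>^2 * \<phi>)"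
    unfolding golden_cube using pos by (simp add: field_simps) (use golden_sq in algebra)
  then show sqrt_v: "sqrt (- (gr_beta^3 / 5)) = 1 / (\<phi> * sqrt (5 * \<phi>))"
    using pos by (simp add: real_sqrt_mult real_sqrt_divide)
  show "(1 - \<phi>^3 / 5) / (2 * sqrt (\<phi>^3 / 5)) = 1 / (\<phi>^3 * sqrt (5 * \<phi>))"
    unfolding u sqrt_u using pos by (simp add: real_sqrt_mult field_simps power3_eq_cube power2_eq_square)
  show "(1 - gr_beta^3 / 5) / (2 * sqrt (- (gr_beta^3 / 5))) = \<phi>^3 * sqrt \<phi> / sqrt 5"
    unfolding v sqrt_v using pos by (simp add: real_sqrt_mult field_simps power3_eq_cube power2_eq_square)
qed

lemma sums_Luc_3k_over_5_pow:
  "(\<lambda>n. let k = Suc n in Luc (3 * k) / (5 ^ k * (2 * real k - 1) * (2 * real k)^2 * (2 * real k + 1)))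
    sums (1 - pi^2 / 48 + (ln 2)^2 / 2 - 3 / 2 * (ln \<phi>)^2 - ln 2 * ln 5 / 2
          + (ln 5)^2 / 4 + Li2 (- 1 / 4) / 4
          - 1 / (\<phi>^3 * sqrt (5 * \<phi>)) * artanh (\<phi> * sqrt \<phi> / sqrt 5)
          - \<phi>^3 * sqrt \<phi> / sqrt 5 * arctan (1 / (\<phi> * sqrt (5 * \<phi>))))"
  (is "?series sums _")
proof -
  have terms: "?series
      = (\<lambda>n. (\<phi>^3 / 5) ^ Suc n * weight (Suc n) + (gr_beta^3 / 5) ^ Suc n * weight (Suc n))"
    using Luc_div_weight[of 3 _ 5] by (simp only: Let_def mult.assoc)
  have "0 < \<phi>^3 / 5" "\<phi>^3 / 5 < 1" "-1 < gr_beta^3 / 5" "gr_beta^3 / 5 < 0"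
    unfolding golden_cube using golden_bounds by auto
  then have sums: "(\<lambda>n. (\<phi>^3 / 5) ^ Suc n * weight (Suc n) + (gr_beta^3 / 5) ^ Suc n * weight (Suc n))
      sums ((1 / 2 - (1 - \<phi>^3 / 5) / (2 * sqrt (\<phi>^3 / 5)) * artanh (sqrt (\<phi>^3 / 5)) - Li2 (\<phi>^3 / 5) / 4)
          + (1 / 2 - (1 - gr_beta^3 / 5) / (2 * sqrt (- (gr_beta^3 / 5))) * arctan (sqrt (- (gr_beta^3 / 5)))
             - Li2 (gr_beta^3 / 5) / 4))"
    by (intro sums_add weight_sums_artanh weight_sums_arctan)
  show ?thesis
    unfolding terms
    by (rule back_subst[of "(sums) _", OF sums])
      (simp only: golden_cube_coefficients(1,2), simp only: golden_cube_coefficients(3,4),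
       use Li2_golden_cube_sum in linarith)
qed

lemma weight_sums_reciprocal_pair:
  fixes p L :: real
  assumes p: "0 < p" and L: "L = p + 1 / p"
  shows "(\<lambda>n. ((p / L) ^ Suc n + (1 / (p * L)) ^ Suc n) * weight (Suc n))
    sums (1 - pi^2 / 24 + ((ln L)^2 - (ln p)^2) / 4
          - sqrt (1 / (p^3 * L)) / 2 * artanh (sqrt (p / L))
          - sqrt (p^3 / L) / 2 * artanh (sqrt (1 / (p * L))))"
proof -
  have "0 < L" unfolding L using p by (simp add: add_pos_pos)
  define u v where "u = p / L" and "v = 1 / (p * L)"
  have "0 < u" "0 < v"
    unfolding u_def v_def using p \<open>0 < L\<close> by simp_all
  have "u + v = (p^2 + 1) / (p * L)"
    unfolding u_def v_def using p \<open>0 < L\<close> by (simp add: field_simps power2_eq_square)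
  also have "p * L = p^2 + 1"
    unfolding L using p by (simp add: field_simps power2_eq_square)
  finally have "u + v = 1"
    using zero_le_power2[of p] by simp
  note sums = weight_sums_complementary[OF \<open>0 < u\<close> \<open>0 < v\<close> this]
  have "v / (2 * sqrt u) = sqrt (v^2 / u) / 2" "u / (2 * sqrt v) = sqrt (u^2 / v) / 2"
    using \<open>0 < u\<close> \<open>0 < v\<close> by (simp_all add: real_sqrt_divide)
  moreover have "v^2 / u = 1 / (p^3 * L)" "u^2 / v = p^3 / L"
    unfolding u_def v_def using p \<open>0 < L\<close> by (simp_all add: field_simps power2_eq_square power3_eq_cube)
  ultimately have coefficients: "v / (2 * sqrt u) = sqrt (1 / (p^3 * L)) / 2"
    "u / (2 * sqrt v) = sqrt (p^3 / L) / 2"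
    by simp_all
  have "ln u = ln p - ln L" "ln v = - ln p - ln L"
    unfolding u_def v_def using p \<open>0 < L\<close> by (simp_all add: ln_div ln_mult)
  then have ln_product: "ln u * ln v = (ln L)^2 - (ln p)^2"
    by (simp only:) (simp add: algebra_simps power2_eq_square)
  show ?thesis
    unfolding u_def[symmetric] v_def[symmetric]
    by (rule back_subst[of "(sums) _", OF sums]) (simp only: coefficients ln_product)
qed

lemma sums_Luc_rk_over_Luc_r_pow:
  assumes "even r"
  shows "(\<lambda>n. let k = Suc n in Luc (r * k) / (Luc r ^ k * (2 * real k - 1) * (2 * real k)^2 * (2 * real k + 1)))
    sums (1 - pi^2 / 24 - (real r)^2 * (ln \<phi>)^2 / 4 + (ln (Luc r))^2 / 4
          - sqrt (1 / (\<phi> ^ (3 * r) * Luc r)) / 2 * artanh (sqrt (\<phi> ^ r / Luc r))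
          - sqrt (\<phi> ^ (3 * r) / Luc r) / 2 * artanh (sqrt (1 / (\<phi> ^ r * Luc r))))"
  (is "?series sums _")
proof -
  have beta: "gr_beta ^ r = 1 / \<phi> ^ r"
    unfolding gr_beta_eq_inverse using assms by (simp add: power_divide)
  have "0 < \<phi> ^ r" "Luc r = \<phi> ^ r + 1 / \<phi> ^ r"
    unfolding Luc_def beta using golden_bounds by simp_all
  note sums = weight_sums_reciprocal_pair[OF this]
  have terms: "?series
      = (\<lambda>n. ((\<phi> ^ r / Luc r) ^ Suc n + (1 / (\<phi> ^ r * Luc r)) ^ Suc n) * weight (Suc n))"
    using Luc_div_weight[of r _ "Luc r"]
    by (simp only: Let_def mult.assoc beta distrib_right divide_divide_eq_left)
  have powers: "(\<phi> ^ r)^3 = \<phi> ^ (3 * r)" "ln (\<phi> ^ r) = real r * ln \<phi>"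
    using golden_bounds by (simp_all add: power_mult[symmetric] mult.commute ln_realpow)
  show ?thesis
    unfolding terms
    by (rule back_subst[of "(sums) _", OF sums])
      (simp only: powers, simp add: power_mult_distrib field_simps)
qed

lemma sums_even_odd_nonneg:
  fixes f :: "nat \<Rightarrow> real"
  assumes "f sums s" "\<And>n. 0 \<le> f n"
  shows "summable (\<lambda>n. f (2 * n)) \<and> summable (\<lambda>n. f (2 * n + 1))
    \<and> (\<Sum>n. f (2 * n)) + (\<Sum>n. f (2 * n + 1)) = s"
proof -
  have "{n * 2..<n * 2 + 2} = {2 * n, 2 * n + 1}" for n :: nat by auto
  then have pairs: "(\<lambda>n. f (2 * n) + f (2 * n + 1)) sums s"
    using sums_group[OF assms(1), of 2] by simp
  have "summable (\<lambda>n. f (2 * n))" "summable (\<lambda>n. f (2 * n + 1))"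
    by (rule summable_comparison_test'[OF sums_summable[OF pairs]]; use assms(2) in simp)+
  with pairs show ?thesis
    by (simp add: suminf_add sums_iff)
qed

lemma Luc_even_div_weight:
  "Luc (2 * k) / (5 ^ k * (4 * real k - 1) * (4 * real k)^2 * (4 * real k + 1))
    = ((\<phi> / sqrt 5) ^ (2 * k) + (1 / (sqrt 5 * \<phi>)) ^ (2 * k)) * weight (2 * k)"
proof -
  have powers: "(\<phi> / sqrt 5) ^ (2 * k) + (1 / (sqrt 5 * \<phi>)) ^ (2 * k) = Luc (2 * k) / 5 ^ k"
    unfolding Luc_def gr_beta_eq_inverse
    by (simp add: power_mult power_divide power_mult_distrib add_divide_distrib)
  have "weight (2 * k) = 1 / ((4 * real k - 1) * (4 * real k)^2 * (4 * real k + 1))"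
    unfolding weight_def by simp
  then show ?thesis
    unfolding powers by (simp add: mult.assoc)
qed

lemma Fib_odd_div_weight:
  "Fib (2 * Suc n - 1)
      / (5 ^ (Suc n - 1) * (4 * real (Suc n) - 3) * (4 * real (Suc n) - 2)^2 * (4 * real (Suc n) - 1))
    = ((\<phi> / sqrt 5) ^ Suc (2 * n) + (1 / (sqrt 5 * \<phi>)) ^ Suc (2 * n)) * weight (Suc (2 * n))"
proof -
  have "sqrt 5 ^ Suc (2 * n) = sqrt 5 * 5 ^ n"
    by (simp add: power_mult)
  moreover have "gr_alpha - gr_beta = sqrt 5"
    unfolding gr_alpha_def gr_beta_def by (simp add: field_simps)
  ultimately have powers: "(\<phi> / sqrt 5) ^ Suc (2 * n) + (1 / (sqrt 5 * \<phi>)) ^ Suc (2 * n)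
      = Fib (2 * Suc n - 1) / 5 ^ (Suc n - 1)"
    unfolding Fib_def gr_beta_eq_inverse
    by (simp add: power_divide power_mult_distrib add_divide_distrib)
  have "weight (Suc (2 * n))
      = 1 / ((4 * real (Suc n) - 3) * (4 * real (Suc n) - 2)^2 * (4 * real (Suc n) - 1))"
    unfolding weight_def by (simp add: algebra_simps)
  then show ?thesis
    unfolding powers by (simp add: mult.assoc)
qed

lemma golden_sqrt5_coefficients:
  "1 / (sqrt 5 * \<phi>) / (2 * sqrt (\<phi> / sqrt 5)) = 1 / (2 * sqrt (sqrt 5)) * (1 / (\<phi> * sqrt \<phi>))"
  "\<phi> / sqrt 5 / (2 * sqrt (1 / (sqrt 5 * \<phi>))) = 1 / (2 * sqrt (sqrt 5)) * (\<phi> * sqrt \<phi>)"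
proof -
  define q where "q = sqrt (sqrt (5::real))"
  have q: "0 < q" "sqrt 5 = q^2" unfolding q_def by simp_all
  have "0 < \<phi>" "0 < sqrt \<phi>" using golden_bounds by simp_all
  then show "1 / (sqrt 5 * \<phi>) / (2 * sqrt (\<phi> / sqrt 5)) = 1 / (2 * sqrt (sqrt 5)) * (1 / (\<phi> * sqrt \<phi>))"
    "\<phi> / sqrt 5 / (2 * sqrt (1 / (sqrt 5 * \<phi>))) = 1 / (2 * sqrt (sqrt 5)) * (\<phi> * sqrt \<phi>)"
    unfolding q_def[symmetric] q(2) using q(1)
    by (simp_all add: real_sqrt_divide real_sqrt_mult field_simps power2_eq_square)
qed

lemma sums_Luc_2k_Fib_odd_over_5_pow:
  "summable (\<lambda>n. let k = Suc n in Luc (2 * k) / (5 ^ k * (4 * real k - 1) * (4 * real k)^2 * (4 * real k + 1)))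
  \<and> summable (\<lambda>n. let k = Suc n in Fib (2 * k - 1) / (5 ^ (k - 1) * (4 * real k - 3) * (4 * real k - 2)^2 * (4 * real k - 1)))
  \<and> (\<Sum>n. let k = Suc n in Luc (2 * k) / (5 ^ k * (4 * real k - 1) * (4 * real k)^2 * (4 * real k + 1)))
    + (\<Sum>n. let k = Suc n in Fib (2 * k - 1) / (5 ^ (k - 1) * (4 * real k - 3) * (4 * real k - 2)^2 * (4 * real k - 1)))
    = 1 - pi^2 / 24 + (ln 5)^2 / 16 - (ln \<phi>)^2 / 4
      - 1 / (2 * sqrt (sqrt 5)) * (1 / (\<phi> * sqrt \<phi>) * artanh (sqrt (\<phi> / sqrt 5))
                                  + \<phi> * sqrt \<phi> * artanh (sqrt (1 / (sqrt 5 * \<phi>))))"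
  (is "summable ?Luc_series \<and> summable ?Fib_series \<and> _ + _ = ?value")
proof -
  define u v where "u = \<phi> / sqrt 5" and "v = 1 / (sqrt 5 * \<phi>)"
  define f where "f n = (u ^ Suc n + v ^ Suc n) * weight (Suc n)" for n
  have "0 < u" "0 < v" unfolding u_def v_def using golden_bounds by simp_all
  moreover have "u + v = 1"
    unfolding u_def v_def sqrt5_eq using golden_sq golden_bounds by (simp add: field_simps) algebra
  ultimately have sums: "f sums (1 - pi^2 / 24 + ln u * ln v / 4
      - v / (2 * sqrt u) * artanh (sqrt u) - u / (2 * sqrt v) * artanh (sqrt v))"
    unfolding f_def by (rule weight_sums_complementary)
  have "0 \<le> f n" for n
    unfolding f_def weight_def using \<open>0 < u\<close> \<open>0 < v\<close> by simp
  note split = sums_even_odd_nonneg[OF sums this]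
  have Luc_terms: "?Luc_series = (\<lambda>n. f (2 * n + 1))"
    unfolding Let_def Luc_even_div_weight f_def u_def v_def by simp
  have Fib_terms: "?Fib_series = (\<lambda>n. f (2 * n))"
    unfolding Let_def Fib_odd_div_weight f_def u_def v_def ..
  have ln_product: "ln u * ln v = (ln 5)^2 / 4 - (ln \<phi>)^2"
    unfolding u_def v_def using golden_bounds
    by (simp add: ln_div ln_mult ln_sqrt algebra_simps power2_eq_square)
  have "1 - pi^2 / 24 + ln u * ln v / 4
      - v / (2 * sqrt u) * artanh (sqrt u) - u / (2 * sqrt v) * artanh (sqrt v) = ?value"
    unfolding ln_product unfolding u_def v_def golden_sqrt5_coefficients
    by (simp only: distrib_left mult.assoc diff_divide_distrib)
  with split show ?thesis
    unfolding Luc_terms Fib_terms by (simp add: add.commute)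
qed

lemma golden_square_artanh_terms:
  "(1 - \<phi>^2 / 4) / (2 * sqrt (\<phi>^2 / 4)) * artanh (sqrt (\<phi>^2 / 4))
    + (1 - gr_beta^2 / 4) / (2 * sqrt (gr_beta^2 / 4)) * artanh (sqrt (gr_beta^2 / 4))
   = 9 * sqrt 5 / 8 * ln \<phi> - 5 / 16 * ln 5"
proof -
  have beta_sq: "gr_beta^2 = (\<phi> - 1)^2"
    unfolding gr_beta_eq by (simp add: power2_commute)
  have pos: "0 < \<phi>" "0 < \<phi> - 1" using golden_bounds by simp_all
  have sqrt: "sqrt (\<phi>^2 / 4) = \<phi> / 2" "sqrt (gr_beta^2 / 4) = (\<phi> - 1) / 2"
    unfolding beta_sq using pos by (simp_all add: real_sqrt_divide)
  have "(1 + \<phi> / 2) / (1 - \<phi> / 2) = sqrt 5 * \<phi>^3"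
    "(1 + (\<phi> - 1) / 2) / (1 - (\<phi> - 1) / 2) = \<phi>^3 / sqrt 5"
    unfolding sqrt5_eq using golden_bounds by (simp_all add: field_simps) (use golden_sq in algebra)+
  then have artanh: "artanh (\<phi> / 2) = (ln 5 / 2 + 3 * ln \<phi>) / 2"
    "artanh ((\<phi> - 1) / 2) = (3 * ln \<phi> - ln 5 / 2) / 2"
    using pos by (simp_all add: artanh_def ln_mult ln_div ln_sqrt ln_realpow)
  define cu cv where "cu = (1 - \<phi>^2 / 4) / (2 * sqrt (\<phi>^2 / 4))"
    and "cv = (1 - gr_beta^2 / 4) / (2 * sqrt (gr_beta^2 / 4))"
  have sum_diff: "cu + cv = 3 * sqrt 5 / 4" "cu - cv = - 5 / 4"
    unfolding cu_def cv_def sqrt unfolding beta_sq sqrt5_eq using pos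
    by (simp_all add: field_simps) (use golden_sq in algebra)+
  have "cu * artanh (sqrt (\<phi>^2 / 4)) + cv * artanh (sqrt (gr_beta^2 / 4))
      = 3 * ln \<phi> / 2 * (cu + cv) + ln 5 / 4 * (cu - cv)"
    unfolding sqrt artanh by (simp add: field_simps)
  also have "\<dots> = 9 * sqrt 5 / 8 * ln \<phi> - 5 / 16 * ln 5"
    unfolding sum_diff by (simp add: mult_ac)
  finally show ?thesis
    unfolding cu_def cv_def .
qed

lemma sums_Luc_2k_over_4_pow:
  "(\<lambda>n. let k = Suc n in Luc (2 * k) / (4 ^ (k + 1) * (2 * real k - 1) * (real k)^2 * (2 * real k + 1)))
    sums (1 - pi^2 / 24 - (ln \<phi>)^2 / 2 - 9 * sqrt 5 / 8 * ln \<phi> + 5 / 16 * ln 5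
          + (ln 5)^2 / 8 - ln 2 * ln 5 / 2 + (ln 2)^2 + Li2 (1 / 5) / 4)"
  (is "?series sums _")
proof -
  have "Luc (2 * k) / (4 ^ (k + 1) * (2 * real k - 1) * (real k)^2 * (2 * real k + 1))
      = (\<phi>^2 / 4) ^ k * weight k + (gr_beta^2 / 4) ^ k * weight k" for k
  proof -
    have denominator: "4 ^ (k + 1) * (2 * real k - 1) * (real k)^2 * (2 * real k + 1)
        = 4 ^ k * ((2 * real k - 1) * (2 * real k)^2 * (2 * real k + 1))"
      by (simp add: power2_eq_square)
    show ?thesis unfolding denominator by (rule Luc_div_weight)
  qed
  then have terms: "?series
      = (\<lambda>n. (\<phi>^2 / 4) ^ Suc n * weight (Suc n) + (gr_beta^2 / 4) ^ Suc n * weight (Suc n))"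
    by (simp only: Let_def)
  have "0 < \<phi>^2 / 4" "\<phi>^2 / 4 < 1" "0 < gr_beta^2 / 4" "gr_beta^2 / 4 < 1"
    unfolding golden_sq gr_beta_sq using golden_bounds by auto
  then have sums: "(\<lambda>n. (\<phi>^2 / 4) ^ Suc n * weight (Suc n) + (gr_beta^2 / 4) ^ Suc n * weight (Suc n))
      sums ((1 / 2 - (1 - \<phi>^2 / 4) / (2 * sqrt (\<phi>^2 / 4)) * artanh (sqrt (\<phi>^2 / 4)) - Li2 (\<phi>^2 / 4) / 4)
          + (1 / 2 - (1 - gr_beta^2 / 4) / (2 * sqrt (gr_beta^2 / 4)) * artanh (sqrt (gr_beta^2 / 4))
             - Li2 (gr_beta^2 / 4) / 4))"
    by (intro sums_add weight_sums_artanh)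
  show ?thesis
    unfolding terms
    by (rule back_subst[of "(sums) _", OF sums])
      (use golden_square_artanh_terms Li2_golden_square_sum in linarith)
qed

theorem theorem15:
  shows
   "((\<lambda>n. let k = Suc n in Luc k / (2 ^ (k + 2) * (2 * real k - 1) * (real k)^2 * (2 * real k + 1)))
      sums (1 - pi^2 / 48 + (ln 2)^2 / 4 - (ln gr_alpha)^2 / 2
            - 1 / (2 * gr_alpha^2 * sqrt (2 * gr_alpha)) * artanh (sqrt (gr_alpha / 2))
            - gr_alpha^2 * sqrt gr_alpha / (2 * sqrt 2) * arctan (sqrt (1 / (2 * gr_alpha)))))
   \<and> ((\<lambda>n. let k = Suc n in Luc (3 * k) / (5 ^ k * (2 * real k - 1) * (2 * real k)^2 * (2 * real k + 1)))
      sums (1 - pi^2 / 48 + (ln 2)^2 / 2 - 3 / 2 * (ln gr_alpha)^2 - ln 2 * ln 5 / 2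
            + (ln 5)^2 / 4 + Li2 (- 1 / 4) / 4
            - 1 / (gr_alpha^3 * sqrt (5 * gr_alpha)) * artanh (gr_alpha * sqrt gr_alpha / sqrt 5)
            - gr_alpha^3 * sqrt gr_alpha / sqrt 5 * arctan (1 / (gr_alpha * sqrt (5 * gr_alpha)))))
   \<and> (\<forall>r::nat. even r \<longrightarrow>
      (\<lambda>n. let k = Suc n in Luc (r * k) / (Luc r ^ k * (2 * real k - 1) * (2 * real k)^2 * (2 * real k + 1)))
      sums (1 - pi^2 / 24 - (real r)^2 * (ln gr_alpha)^2 / 4 + (ln (Luc r))^2 / 4
            - sqrt (1 / (gr_alpha ^ (3 * r) * Luc r)) / 2 * artanh (sqrt (gr_alpha ^ r / Luc r))
            - sqrt (gr_alpha ^ (3 * r) / Luc r) / 2 * artanh (sqrt (1 / (gr_alpha ^ r * Luc r)))))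
   \<and> (summable (\<lambda>n. let k = Suc n in Luc (2 * k) / (5 ^ k * (4 * real k - 1) * (4 * real k)^2 * (4 * real k + 1)))
    \<and> summable (\<lambda>n. let k = Suc n in Fib (2 * k - 1) / (5 ^ (k - 1) * (4 * real k - 3) * (4 * real k - 2)^2 * (4 * real k - 1)))
    \<and> (\<Sum>n. let k = Suc n in Luc (2 * k) / (5 ^ k * (4 * real k - 1) * (4 * real k)^2 * (4 * real k + 1)))
      + (\<Sum>n. let k = Suc n in Fib (2 * k - 1) / (5 ^ (k - 1) * (4 * real k - 3) * (4 * real k - 2)^2 * (4 * real k - 1)))
      = 1 - pi^2 / 24 + (ln 5)^2 / 16 - (ln gr_alpha)^2 / 4
        - 1 / (2 * sqrt (sqrt 5)) * (1 / (gr_alpha * sqrt gr_alpha) * artanh (sqrt (gr_alpha / sqrt 5))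
                                    + gr_alpha * sqrt gr_alpha * artanh (sqrt (1 / (sqrt 5 * gr_alpha)))))
   \<and> ((\<lambda>n. let k = Suc n in Luc (2 * k) / (4 ^ (k + 1) * (2 * real k - 1) * (real k)^2 * (2 * real k + 1)))
      sums (1 - pi^2 / 24 - (ln gr_alpha)^2 / 2 - 9 * sqrt 5 / 8 * ln gr_alpha + 5 / 16 * ln 5
            + (ln 5)^2 / 8 - ln 2 * ln 5 / 2 + (ln 2)^2 + Li2 (1 / 5) / 4))"
  using sums_Luc_rk_over_Luc_r_pow
  by (intro conjI allI impI sums_Luc_over_2_pow sums_Luc_3k_over_5_pow sums_Luc_2k_over_4_pow)
    (use sums_Luc_2k_Fib_odd_over_5_pow in simp_all)

end
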